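(* The Mixing method $M_\theta$ with a step size $\theta\in\left(0,\frac{1}{\max_i\|c_i\|_1}\right)$ is a diffeomorphism.
   Context: Let $C\in\mathbb{R}^{n\times n}$ be symmetric with columns $c_i$ and $c_{ii}=0$; $\|\cdot\|_1$ is the $1$-norm and $\|\cdot\|$ the Euclidean norm. $M_\theta$ maps $V\in\mathbb{R}^{k\times n}$ with unit-norm columns to the result of one cyclic pass: for $i=1,\ldots,n$ in order, $v_i:=(v_i-\theta Vc_i)/\|v_i-\theta Vc_i\|$, where $V$ contains the most recent columns. The map is considered on the product of unit spheres. *)

theory Defs
  imports "HOL-Analysis.Analysis"
begin

coinductive smooth_on :: "'a::real_normed_vector set \<Rightarrow> ('a \<Rightarrow> 'b::real_normed_vector) \<Rightarrow> bool" where
  "open U \<Longrightarrow> f differentiable_on U \<Longrightarrow>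
   (\<forall>v. smooth_on U (\<lambda>x. frechet_derivative f (at x) v)) \<Longrightarrow> smooth_on U f"

definition smooth_map_on :: "'a::euclidean_space set \<Rightarrow> ('a \<Rightarrow> 'b::euclidean_space) \<Rightarrow> bool" where
  "smooth_map_on S f \<longleftrightarrow>
     (\<forall>x\<in>S. \<exists>U g. open U \<and> x \<in> U \<and> smooth_on U g \<and> (\<forall>y\<in>S \<inter> U. g y = f y))"

definition diffeomorphism_on :: "'a::euclidean_space set \<Rightarrow> ('a \<Rightarrow> 'a) \<Rightarrow> bool" where
  "diffeomorphism_on S f \<longleftrightarrow>
     bij_betw f S S \<and> smooth_map_on S f \<and> smooth_map_on S (inv_into S f)"

text \<open>Matrices V in R^(k x n) have type real^n^k; V $ r $ i is the entry (r,i);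
  the columns are indexed by the finite linearly ordered type 'n.\<close>

definition col :: "real^'n^'k \<Rightarrow> 'n \<Rightarrow> real^'k" where
  "col V i = (\<chi> r. V $ r $ i)"

definition set_col :: "real^'n^'k \<Rightarrow> 'n \<Rightarrow> real^'k \<Rightarrow> real^'n^'k" where
  "set_col V i w = (\<chi> r. \<chi> j. if j = i then w $ r else V $ r $ j)"

definition sphere_prod :: "(real^'n^'k) set" where
  "sphere_prod = {V. \<forall>i. norm (col V i) = 1}"

definition mix_update :: "real \<Rightarrow> real^'n^'n \<Rightarrow> 'n \<Rightarrow> real^'n^'k \<Rightarrow> real^'n^'k" where
  "mix_update \<theta> C i V =
     (let w = col V i - \<theta> *\<^sub>R (V *v col C i) in set_col V i (w /\<^sub>R norm w))"

definition mixing :: "real \<Rightarrow> real^('n::{finite,linorder})^('n::{finite,linorder}) \<Rightarrow> real^('n::{finite,linorder})^'k \<Rightarrow> real^('n::{finite,linorder})^'k" where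
  "mixing \<theta> C V = fold (mix_update \<theta> C) (sorted_list_of_set (UNIV :: ('n::{finite,linorder}) set)) V"

definition col_norm1 :: "real^'n^'n \<Rightarrow> 'n \<Rightarrow> real" where
  "col_norm1 C i = (\<Sum>j\<in>UNIV. \<bar>C $ j $ i\<bar>)"

end

theory Submission
  imports Defs
begin

text \<open>Each update v_i := (v_i - a)/|v_i - a| with a = \<theta> V c_i leaves a unchanged, since
  c_ii = 0, and |a| \<le> \<theta> |c_i|_1 < 1 on the product of spheres. So the old column is the
  point of the ray a + t u (u the new column, t > 0) on the unit sphere, and t is the positive
  root of a quadratic: t = -a\<bullet>u + sqrt((a\<bullet>u)^2 + 1 - |a|^2). Both the update and this
  inverse are built from linear maps by sums, products, inverses of nonvanishing functions and
  square roots of positive functions; such functions are smooth on open sets, and the cyclic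
  pass and its inverse (the inverse updates in reverse order) are compositions of them.\<close>

section \<open>Elementary functions and smoothness\<close>

text \<open>The congruence rule is restricted to open sets, where agreement on U determines
  derivatives; it keeps the class closed under frechet_derivative, which is an arbitrary
  choice outside U.\<close>

inductive elementary_on :: "'a::real_normed_vector set \<Rightarrow> ('a \<Rightarrow> real) \<Rightarrow> bool" for U where
  elementary_on_const: "elementary_on U (\<lambda>x. c)"
| elementary_on_linear: "bounded_linear l \<Longrightarrow> elementary_on U l"
| elementary_on_add: "elementary_on U f \<Longrightarrow> elementary_on U g \<Longrightarrow> elementary_on U (\<lambda>x. f x + g x)"
| elementary_on_mult: "elementary_on U f \<Longrightarrow> elementary_on U g \<Longrightarrow> elementary_on U (\<lambda>x. f x * g x)"
| elementary_on_inverse: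
    "elementary_on U f \<Longrightarrow> (\<forall>x\<in>U. f x \<noteq> 0) \<Longrightarrow> elementary_on U (\<lambda>x. inverse (f x))"
| elementary_on_sqrt:
    "elementary_on U f \<Longrightarrow> (\<forall>x\<in>U. 0 < f x) \<Longrightarrow> elementary_on U (\<lambda>x. sqrt (f x))"
| elementary_on_cong: "open U \<Longrightarrow> elementary_on U f \<Longrightarrow> (\<forall>x\<in>U. f x = g x) \<Longrightarrow> elementary_on U g"

lemma elementary_on_cmult: "elementary_on U f \<Longrightarrow> elementary_on U (\<lambda>x. c * f x)"
  by (rule elementary_on_mult[OF elementary_on_const])

lemma elementary_on_uminus: "elementary_on U f \<Longrightarrow> elementary_on U (\<lambda>x. - f x)"
  using elementary_on_cmult[of U f "-1"] by simp

lemma elementary_on_diff: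
  "elementary_on U f \<Longrightarrow> elementary_on U g \<Longrightarrow> elementary_on U (\<lambda>x. f x - g x)"
  using elementary_on_add[OF _ elementary_on_uminus] by fastforce

lemma elementary_on_sum:
  "finite A \<Longrightarrow> (\<And>a. a \<in> A \<Longrightarrow> elementary_on U (f a)) \<Longrightarrow> elementary_on U (\<lambda>x. \<Sum>a\<in>A. f a x)"
  by (induction A rule: finite_induct) (auto intro: elementary_on.intros)

lemma elementary_on_subset:
  "elementary_on U f \<Longrightarrow> U' \<subseteq> U \<Longrightarrow> open U' \<Longrightarrow> elementary_on U' f"
  by (induction rule: elementary_on.induct) (auto intro: elementary_on.intros)

lemma elementary_on_has_derivative:
  assumes "elementary_on U f"
  shows "\<exists>f'. (\<forall>x\<in>U. (f has_derivative f' x) (at x)) \<and> (\<forall>v. elementary_on U (\<lambda>x. f' x v))"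
  using assms
proof (induction rule: elementary_on.induct)
  case (elementary_on_const c)
  show ?case by (rule exI[of _ "\<lambda>x v. 0"]) (auto intro: elementary_on.intros)
next
  case (elementary_on_linear l)
  then show ?case
    by (intro exI[of _ "\<lambda>x. l"]) (auto intro: elementary_on.intros bounded_linear_imp_has_derivative)
next
  case (elementary_on_add f g)
  then obtain f' g' where "\<forall>x\<in>U. (f has_derivative f' x) (at x)" "\<forall>v. elementary_on U (\<lambda>x. f' x v)"
    "\<forall>x\<in>U. (g has_derivative g' x) (at x)" "\<forall>v. elementary_on U (\<lambda>x. g' x v)" by blast
  then show ?case
    by (intro exI[of _ "\<lambda>x v. f' x v + g' x v"]) (auto intro: elementary_on.intros has_derivative_add)
next
  case (elementary_on_mult f g)
  then obtain f' g' where "\<forall>x\<in>U. (f has_derivative f' x) (at x)" "\<forall>v. elementary_on U (\<lambda>x. f' x v)"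
    "\<forall>x\<in>U. (g has_derivative g' x) (at x)" "\<forall>v. elementary_on U (\<lambda>x. g' x v)" by blast
  with elementary_on_mult.hyps show ?case
    by (intro exI[of _ "\<lambda>x v. f x * g' x v + f' x v * g x"])
      (auto intro!: elementary_on.elementary_on_add elementary_on.elementary_on_mult has_derivative_mult)
next
  case (elementary_on_inverse f)
  then obtain f' where "\<forall>x\<in>U. (f has_derivative f' x) (at x)" "\<forall>v. elementary_on U (\<lambda>x. f' x v)"
    by blast
  moreover have "elementary_on U (\<lambda>x. inverse (f x))"
    using elementary_on_inverse.hyps by (rule elementary_on.elementary_on_inverse)
  ultimately show ?case using elementary_on_inverse.hyps(2)
    by (intro exI[of _ "\<lambda>x v. - (inverse (f x) * f' x v * inverse (f x))"])
      (auto intro!: elementary_on_uminus elementary_on.elementary_on_mult has_derivative_inverse)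
next
  case (elementary_on_sqrt f)
  then obtain f' where d: "\<forall>x\<in>U. (f has_derivative f' x) (at x)"
    and e: "\<forall>v. elementary_on U (\<lambda>x. f' x v)"
    by blast
  have "elementary_on U (\<lambda>x. inverse (sqrt (f x)))"
    using elementary_on_sqrt.hyps
    by (auto intro!: elementary_on.elementary_on_inverse elementary_on.elementary_on_sqrt)
  with e have "elementary_on U (\<lambda>x. f' x v * (inverse (sqrt (f x)) * (1/2)))" for v
    by (intro elementary_on.elementary_on_mult elementary_on_const) auto
  moreover have "((\<lambda>x. sqrt (f x)) has_derivative (\<lambda>v. f' x v * (inverse (sqrt (f x)) * (1/2)))) (at x)"
    if "x \<in> U" for x
    using has_derivative_real_sqrt[OF _ d[rule_format, OF that]] elementary_on_sqrt.hyps(2) that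
    by (simp add: mult.assoc)
  ultimately show ?case
    by (intro exI[of _ "\<lambda>x v. f' x v * (inverse (sqrt (f x)) * (1/2))"]) blast
next
  case (elementary_on_cong f g)
  then obtain f' where "\<forall>x\<in>U. (f has_derivative f' x) (at x)" "\<forall>v. elementary_on U (\<lambda>x. f' x v)"
    by blast
  with elementary_on_cong.hyps show ?case
    by (intro exI[of _ f']) (auto intro: has_derivative_transform_within_open)
qed

lemma elementary_on_continuous_on: "elementary_on U f \<Longrightarrow> continuous_on U f"
  by (metis elementary_on_has_derivative has_derivative_continuous continuous_at_imp_continuous_on)

definition elementary_components_on :: "'a::real_normed_vector set \<Rightarrow> ('a \<Rightarrow> 'b::euclidean_space) \<Rightarrow> bool"
  where "elementary_components_on U F \<longleftrightarrow> (\<forall>b\<in>Basis. elementary_on U (\<lambda>x. F x \<bullet> b))"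

lemma elementary_components_on_subset:
  "elementary_components_on U F \<Longrightarrow> U' \<subseteq> U \<Longrightarrow> open U' \<Longrightarrow> elementary_components_on U' F"
  unfolding elementary_components_on_def using elementary_on_subset by blast

lemma elementary_components_on_id: "elementary_components_on U (\<lambda>x. x)"
  unfolding elementary_components_on_def
  by (auto intro: elementary_on_linear bounded_linear_inner_left)

lemma elementary_components_on_has_derivative:
  fixes F :: "'a::real_normed_vector \<Rightarrow> 'b::euclidean_space"
  assumes "elementary_components_on U F"
  shows "\<exists>F'. (\<forall>x\<in>U. (F has_derivative F' x) (at x)) \<and> (\<forall>v. elementary_components_on U (\<lambda>x. F' x v))"
proof -
  have "\<forall>b\<in>Basis. \<exists>g'. (\<forall>x\<in>U. ((\<lambda>y. F y \<bullet> b) has_derivative g' x) (at x))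
      \<and> (\<forall>v. elementary_on U (\<lambda>x. g' x v))"
    using assms elementary_on_has_derivative unfolding elementary_components_on_def by blast
  then obtain G' where G': "\<forall>b\<in>Basis. (\<forall>x\<in>U. ((\<lambda>y. F y \<bullet> b) has_derivative G' b x) (at x))
      \<and> (\<forall>v. elementary_on U (\<lambda>x. G' b x v))"
    by (rule bchoice[THEN exE])
  then have "((\<lambda>y. \<Sum>b\<in>Basis. (F y \<bullet> b) *\<^sub>R b) has_derivative (\<lambda>v. \<Sum>b\<in>Basis. G' b x v *\<^sub>R b)) (at x)"
    if "x \<in> U" for x
    using that by (intro has_derivative_sum has_derivative_scaleR_left) auto
  moreover have "elementary_components_on U (\<lambda>x. \<Sum>b\<in>Basis. G' b x v *\<^sub>R b)" for v
    using G' by (simp add: elementary_components_on_def)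
  ultimately show ?thesis
    by (intro exI[of _ "\<lambda>x v. \<Sum>b\<in>Basis. G' b x v *\<^sub>R b"]) (simp add: euclidean_representation)
qed

lemma elementary_components_on_smooth_on:
  fixes F :: "'a::real_normed_vector \<Rightarrow> 'b::euclidean_space"
  assumes "open U" "elementary_components_on U F"
  shows "smooth_on U F"
  using assms(2)
proof (coinduction arbitrary: F)
  case (smooth_on F)
  then obtain F' where F': "\<forall>x\<in>U. (F has_derivative F' x) (at x)"
    "\<forall>v. elementary_components_on U (\<lambda>x. F' x v)"
    using elementary_components_on_has_derivative by blast
  moreover have "frechet_derivative F (at x) = F' x" if "x \<in> U" for x
    using F'(1) that frechet_derivative_at by metis
  ultimately have "elementary_components_on U (\<lambda>x. frechet_derivative F (at x) v)" for v
    unfolding elementary_components_on_def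
    using elementary_on_cong[OF assms(1)] by (metis (mono_tags, lifting))
  then show ?case
    using assms(1) F' by (auto simp: differentiable_on_def differentiable_def intro: has_derivative_at_withinI)
qed

lemma elementary_components_on_continuous_on:
  fixes F :: "'a::real_normed_vector \<Rightarrow> 'b::euclidean_space"
  shows "elementary_components_on U F \<Longrightarrow> continuous_on U F"
  by (metis elementary_components_on_has_derivative has_derivative_continuous
      continuous_at_imp_continuous_on)

lemma elementary_on_compose:
  fixes F :: "'a::real_normed_vector \<Rightarrow> 'b::euclidean_space"
  assumes "elementary_on V h" "elementary_components_on W F" "F ` W \<subseteq> V" "open W"
  shows "elementary_on W (\<lambda>x. h (F x))"
  using assms
proof (induction rule: elementary_on.induct)
  case (elementary_on_linear l)
  have "l (F x) = (\<Sum>b\<in>Basis. (F x \<bullet> b) * l b)" for x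
  proof -
    have "l (F x) = l (\<Sum>b\<in>Basis. (F x \<bullet> b) *\<^sub>R b)" by (simp add: euclidean_representation)
    also have "\<dots> = (\<Sum>b\<in>Basis. (F x \<bullet> b) * l b)"
      using bounded_linear.linear[OF elementary_on_linear.hyps] by (simp add: linear_sum linear_cmul)
    finally show ?thesis .
  qed
  moreover have "elementary_on W (\<lambda>x. \<Sum>b\<in>Basis. (F x \<bullet> b) * l b)"
    using elementary_on_linear.prems
    by (intro elementary_on_sum) (auto simp: elementary_components_on_def intro: elementary_on.intros)
  ultimately show ?case by simp
next
  case (elementary_on_cong f g)
  then show ?case by (auto intro: elementary_on.elementary_on_cong[of W "\<lambda>x. f (F x)"])
next
  case (elementary_on_inverse f)
  then show ?case by (auto intro!: elementary_on.elementary_on_inverse)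
next
  case (elementary_on_sqrt f)
  then show ?case by (auto intro!: elementary_on.elementary_on_sqrt)
qed (auto intro: elementary_on.intros)

lemma elementary_components_on_compose:
  fixes F :: "'a::real_normed_vector \<Rightarrow> 'b::euclidean_space" and G :: "'b \<Rightarrow> 'c::euclidean_space"
  assumes "elementary_components_on V G" "elementary_components_on W F" "F ` W \<subseteq> V" "open W"
  shows "elementary_components_on W (\<lambda>x. G (F x))"
  using assms elementary_on_compose[of V _ W F] unfolding elementary_components_on_def by blast

definition elementary_near :: "'a::euclidean_space set \<Rightarrow> ('a \<Rightarrow> 'b::euclidean_space) \<Rightarrow> bool"
  where "elementary_near S F \<longleftrightarrow> (\<exists>U. open U \<and> S \<subseteq> U \<and> elementary_components_on U F)"

lemma elementary_near_id: "elementary_near S (\<lambda>x. x)"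
  unfolding elementary_near_def using elementary_components_on_id by blast

lemma elementary_near_compose:
  assumes "elementary_near S F" "F ` S \<subseteq> T" "elementary_near T G"
  shows "elementary_near S (G \<circ> F)"
proof -
  obtain U V where U: "open U" "S \<subseteq> U" "elementary_components_on U F"
    and V: "open V" "T \<subseteq> V" "elementary_components_on V G"
    using assms(1,3) unfolding elementary_near_def by blast
  define W where "W = F -` V \<inter> U"
  have "open W"
    using U elementary_components_on_continuous_on[OF U(3)] V(1) continuous_on_open_vimage
    unfolding W_def by blast
  moreover have "S \<subseteq> W" using U(2) V(2) assms(2) unfolding W_def by blast
  moreover have "elementary_components_on W (\<lambda>x. G (F x))"
    by (rule elementary_components_on_compose[OF V(3) elementary_components_on_subset[OF U(3)]])
      (use \<open>open W\<close> in \<open>auto simp: W_def\<close>)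
  ultimately show ?thesis unfolding elementary_near_def comp_def by blast
qed

lemma elementary_near_fold:
  assumes "\<And>i. elementary_near S (f i)" "\<And>i. f i ` S \<subseteq> S"
  shows "elementary_near S (fold f xs)"
proof (induction xs)
  case Nil
  then show ?case using elementary_near_id by (simp add: id_def)
next
  case (Cons a xs)
  have "fold f (a # xs) = fold f xs \<circ> f a" by (simp add: fun_eq_iff)
  then show ?case by (metis elementary_near_compose assms Cons.IH)
qed

lemma open_Collect_positive_elementary: "elementary_on UNIV p \<Longrightarrow> open {x. 0 < p x}"
  by (intro open_Collect_less continuous_on_const elementary_on_continuous_on)

lemma elementary_near_positive_setI:
  assumes "elementary_on UNIV p" "\<forall>x\<in>S. 0 < p x" "elementary_components_on {x. 0 < p x} F"
  shows "elementary_near S F"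
  using assms open_Collect_positive_elementary unfolding elementary_near_def by blast

lemma elementary_near_smooth_map_on:
  assumes "elementary_near S F" "\<forall>x\<in>S. g x = F x"
  shows "smooth_map_on S g"
  unfolding smooth_map_on_def
proof
  fix x assume "x \<in> S"
  moreover obtain U where "open U" "S \<subseteq> U" "elementary_components_on U F"
    using assms(1) unfolding elementary_near_def by blast
  ultimately show "\<exists>U g'. open U \<and> x \<in> U \<and> smooth_on U g' \<and> (\<forall>y\<in>S \<inter> U. g' y = g y)"
    using elementary_components_on_smooth_on assms(2) by (intro exI[of _ U] exI[of _ F]) auto
qed

lemma diffeomorphism_onI:
  assumes "f ` S \<subseteq> S" "g ` S \<subseteq> S" "\<And>x. x \<in> S \<Longrightarrow> g (f x) = x" "\<And>x. x \<in> S \<Longrightarrow> f (g x) = x"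
    and "elementary_near S f" "elementary_near S g"
  shows "diffeomorphism_on S f"
proof -
  have bij: "bij_betw f S S"
    using assms(1-4) by (intro bij_betw_byWitness[of S g]) auto
  have "\<forall>y\<in>S. inv_into S f y = g y"
    using assms(2,4) by (auto intro: inv_into_f_eq[OF bij_betw_imp_inj_on[OF bij]])
  then show ?thesis
    unfolding diffeomorphism_on_def
    using bij assms(5,6) elementary_near_smooth_map_on by blast
qed

lemma fold_image_subset: "(\<And>i. f i ` S \<subseteq> S) \<Longrightarrow> fold f xs ` S \<subseteq> S"
  by (induction xs) fastforce+

lemma fold_rev_inverse_on:
  assumes "\<And>i. f i ` S \<subseteq> S" "\<And>i. g i ` S \<subseteq> S"
    and "\<And>i x. x \<in> S \<Longrightarrow> g i (f i x) = x" "\<And>i x. x \<in> S \<Longrightarrow> f i (g i x) = x"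
  shows "x \<in> S \<Longrightarrow> fold g (rev xs) (fold f xs x) = x \<and> fold f xs (fold g (rev xs) x) = x"
proof (induction xs arbitrary: x)
  case (Cons a xs)
  have "fold g (rev xs) x \<in> S" "f a x \<in> S"
    using Cons.prems fold_image_subset[OF assms(2), where xs="rev xs"] assms(1)[of a]
    by (simp_all add: image_subset_iff)
  then show ?case using Cons assms(3,4) by simp
qed simp

lemma diffeomorphism_on_fold:
  assumes "\<And>i. f i ` S \<subseteq> S" "\<And>i. g i ` S \<subseteq> S"
    and "\<And>i x. x \<in> S \<Longrightarrow> g i (f i x) = x" "\<And>i x. x \<in> S \<Longrightarrow> f i (g i x) = x"
    and "\<And>i. elementary_near S (f i)" "\<And>i. elementary_near S (g i)"
  shows "diffeomorphism_on S (fold f xs)"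
  using fold_rev_inverse_on[where f = f and g = g, OF assms(1-4)]
  by (intro diffeomorphism_onI[where g = "fold g (rev xs)"] fold_image_subset elementary_near_fold assms)
    auto

section \<open>Recovering a unit vector from its direction\<close>

text \<open>For a unit vector u and |a| < 1, the positive root t of |a + t u| = 1.\<close>

definition unit_ray_length :: "'a::real_inner \<Rightarrow> 'a \<Rightarrow> real"
  where "unit_ray_length a u = - (a \<bullet> u) + sqrt ((a \<bullet> u)\<^sup>2 + 1 - a \<bullet> a)"

lemma norm_add_scaleR_unit_sq:
  fixes a u :: "'a::real_inner"
  assumes "norm u = 1"
  shows "(norm (a + t *\<^sub>R u))\<^sup>2 = a \<bullet> a + 2 * t * (a \<bullet> u) + t\<^sup>2"
proof -
  have "u \<bullet> u = 1" using assms by (simp add: norm_eq_1)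
  then show ?thesis
    unfolding power2_norm_eq_inner
    by (simp add: inner_add_left inner_add_right inner_commute power2_eq_square algebra_simps)
qed

lemma unit_ray_length_pos:
  fixes a u :: "'a::real_inner"
  assumes "norm a < 1"
  shows "0 < unit_ray_length a u"
proof -
  have "a \<bullet> a < 1" using assms by (simp add: norm_eq_sqrt_inner)
  then have "sqrt ((a \<bullet> u)\<^sup>2) < sqrt ((a \<bullet> u)\<^sup>2 + 1 - a \<bullet> a)"
    by (intro real_sqrt_less_mono) simp
  then show ?thesis by (simp add: unit_ray_length_def)
qed

lemma norm_unit_ray:
  fixes a u :: "'a::real_inner"
  assumes "norm u = 1" "norm a < 1"
  shows "norm (a + unit_ray_length a u *\<^sub>R u) = 1"
proof -
  define s where "s = sqrt ((a \<bullet> u)\<^sup>2 + 1 - a \<bullet> a)"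
  have "a \<bullet> a < 1" using assms(2) by (simp add: norm_eq_sqrt_inner)
  moreover have "0 \<le> (a \<bullet> u)\<^sup>2" by simp
  ultimately have "s\<^sup>2 = (a \<bullet> u)\<^sup>2 + 1 - a \<bullet> a" unfolding s_def by (intro real_sqrt_pow2) linarith
  then have "(norm (a + unit_ray_length a u *\<^sub>R u))\<^sup>2 = 1"
    unfolding norm_add_scaleR_unit_sq[OF assms(1)] unit_ray_length_def s_def[symmetric]
    by (simp add: power2_eq_square algebra_simps)
  then show ?thesis by (metis norm_eq_1 power2_norm_eq_inner)
qed

lemma unit_ray_length_sgn:
  fixes a v :: "'a::real_inner"
  assumes "norm v = 1" "norm a < 1"
  shows "unit_ray_length a (sgn (v - a)) = norm (v - a)"
proof -
  define s where "s = norm (v - a)"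
  define u where "u = sgn (v - a)"
  define c where "c = a \<bullet> u"
  have "v \<noteq> a" using assms by auto
  then have s: "0 < s" and u: "norm u = 1" by (simp_all add: s_def u_def norm_sgn)
  have "v = a + s *\<^sub>R u" using \<open>v \<noteq> a\<close> by (simp add: s_def u_def sgn_div_norm)
  then have eq: "1 = a \<bullet> a + 2 * s * c + s\<^sup>2"
    using norm_add_scaleR_unit_sq[OF u, of a s] assms(1) by (simp add: c_def)
  moreover have "a \<bullet> a < 1" using assms(2) by (simp add: norm_eq_sqrt_inner)
  ultimately have "0 < s * (2 * c + s)" by (simp add: algebra_simps power2_eq_square)
  then have "0 \<le> s + c" using s by (simp add: zero_less_mult_iff)
  moreover have "c\<^sup>2 + 1 - a \<bullet> a = (s + c)\<^sup>2" using eq by (simp add: power2_eq_square algebra_simps)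
  ultimately show ?thesis by (simp add: unit_ray_length_def c_def[symmetric] u_def[symmetric] s_def[symmetric])
qed

section \<open>The mixing updates\<close>

lemma col_nth [simp]: "col V i $ r = V $ r $ i"
  by (simp add: col_def)

lemma set_col_nth [simp]: "set_col V i z $ r $ j = (if j = i then z $ r else V $ r $ j)"
  by (simp add: set_col_def)

lemma col_set_col: "col (set_col V i z) j = (if j = i then z else col V j)"
  by (simp add: vec_eq_iff)

lemma set_col_col [simp]: "set_col V i (col V i) = V"
  by (simp add: vec_eq_iff)

lemma set_col_set_col [simp]: "set_col (set_col V i z) i z' = set_col V i z'"
  by (simp add: vec_eq_iff)

lemma set_col_in_sphere_prod: "V \<in> sphere_prod \<Longrightarrow> norm z = 1 \<Longrightarrow> set_col V i z \<in> sphere_prod"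
  by (auto simp: sphere_prod_def col_set_col)

lemma elementary_on_entry: "elementary_on U (\<lambda>V::real^'n^'k. V $ r $ j)"
  by (intro elementary_on_linear bounded_linear_compose[OF bounded_linear_vec_nth bounded_linear_vec_nth])

lemma elementary_on_inner_vec:
  fixes F G :: "'a::real_normed_vector \<Rightarrow> real^'k"
  assumes "\<And>r. elementary_on U (\<lambda>x. F x $ r)" "\<And>r. elementary_on U (\<lambda>x. G x $ r)"
  shows "elementary_on U (\<lambda>x. F x \<bullet> G x)"
  unfolding inner_vec_def inner_real_def by (intro elementary_on_sum elementary_on_mult assms) simp

lemma elementary_components_on_matrixI:
  fixes F :: "'a::real_normed_vector \<Rightarrow> real^'n^'k"
  assumes "\<And>r j. elementary_on U (\<lambda>x. F x $ r $ j)"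
  shows "elementary_components_on U F"
  unfolding elementary_components_on_def
  using assms by (auto simp: Basis_vec_def inner_axis)

lemma elementary_components_on_set_col:
  fixes z :: "real^'n^'k \<Rightarrow> real^'k"
  assumes "\<And>r. elementary_on U (\<lambda>V. z V $ r)"
  shows "elementary_components_on U (\<lambda>V. set_col V i (z V))"
proof (rule elementary_components_on_matrixI)
  fix r j
  show "elementary_on U (\<lambda>V. set_col V i (z V) $ r $ j)"
    using assms by (cases "j = i") (simp_all add: elementary_on_entry)
qed

definition mix_shift :: "real \<Rightarrow> real^'n^'n \<Rightarrow> 'n \<Rightarrow> real^'n^'k \<Rightarrow> real^'k"
  where "mix_shift \<theta> C i V = \<theta> *\<^sub>R (V *v col C i)"

definition mix_update_inv :: "real \<Rightarrow> real^'n^'n \<Rightarrow> 'n \<Rightarrow> real^'n^'k \<Rightarrow> real^'n^'k"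
  where "mix_update_inv \<theta> C i V =
    set_col V i (mix_shift \<theta> C i V + unit_ray_length (mix_shift \<theta> C i V) (col V i) *\<^sub>R col V i)"

lemma mix_update_eq_sgn: "mix_update \<theta> C i V = set_col V i (sgn (col V i - mix_shift \<theta> C i V))"
  by (simp add: mix_update_def mix_shift_def sgn_div_norm Let_def)

lemma mix_shift_nth: "mix_shift \<theta> C i V $ r = \<theta> * (\<Sum>j\<in>UNIV. V $ r $ j * C $ j $ i)"
  by (simp add: mix_shift_def matrix_vector_mult_def)

lemma mix_shift_set_col: "C $ i $ i = 0 \<Longrightarrow> mix_shift \<theta> C i (set_col V i z) = mix_shift \<theta> C i V"
  unfolding vec_eq_iff mix_shift_nth by (auto intro!: sum.cong)

lemma elementary_on_mix_shift: "elementary_on U (\<lambda>V. mix_shift \<theta> C i V $ r)"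
  unfolding mix_shift_nth
  by (intro elementary_on_cmult elementary_on_sum elementary_on_mult elementary_on_entry elementary_on_const) auto

lemma norm_mix_shift_less:
  assumes "0 \<le> \<theta>" "\<theta> * col_norm1 C i < 1" "V \<in> sphere_prod"
  shows "norm (mix_shift \<theta> C i V) < 1"
proof -
  have "mix_shift \<theta> C i V = \<theta> *\<^sub>R (\<Sum>j\<in>UNIV. C $ j $ i *\<^sub>R col V j)"
    by (simp add: mix_shift_def matrix_mult_sum column_def col_def scalar_mult_eq_scaleR)
  then have "norm (mix_shift \<theta> C i V) = \<theta> * norm (\<Sum>j\<in>UNIV. C $ j $ i *\<^sub>R col V j)"
    using assms(1) by simp
  also have "\<dots> \<le> \<theta> * (\<Sum>j\<in>UNIV. norm (C $ j $ i *\<^sub>R col V j))"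
    by (intro mult_left_mono norm_sum assms(1))
  also have "\<dots> = \<theta> * col_norm1 C i"
    using assms(3) by (simp add: col_norm1_def sphere_prod_def)
  finally show ?thesis using assms(2) by linarith
qed

context
  fixes \<theta> :: real and C :: "real^'n^'n" and i :: 'n
  assumes step_size: "0 \<le> \<theta>" "\<theta> * col_norm1 C i < 1"
begin

lemma mix_update_in_sphere_prod:
  assumes "V \<in> sphere_prod"
  shows "mix_update \<theta> C i V \<in> sphere_prod"
proof -
  have "norm (mix_shift \<theta> C i V) < 1" "norm (col V i) = 1"
    using assms norm_mix_shift_less[OF step_size] by (auto simp: sphere_prod_def)
  then have "col V i - mix_shift \<theta> C i V \<noteq> 0" by auto
  then show ?thesis
    using assms by (simp add: mix_update_eq_sgn set_col_in_sphere_prod norm_sgn)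
qed

lemma mix_update_inv_in_sphere_prod: "V \<in> sphere_prod \<Longrightarrow> mix_update_inv \<theta> C i V \<in> sphere_prod"
  using norm_mix_shift_less[OF step_size] unfolding mix_update_inv_def
  by (intro set_col_in_sphere_prod norm_unit_ray) (auto simp: sphere_prod_def)

lemma mix_update_inv_mix_update:
  assumes "C $ i $ i = 0" "V \<in> sphere_prod"
  shows "mix_update_inv \<theta> C i (mix_update \<theta> C i V) = V"
proof -
  define a where "a = mix_shift \<theta> C i V"
  have "norm (col V i) = 1" "norm a < 1"
    using assms(2) norm_mix_shift_less[OF step_size] by (auto simp: sphere_prod_def a_def)
  moreover from this have "col V i - a \<noteq> 0" by auto
  ultimately have "a + unit_ray_length a (sgn (col V i - a)) *\<^sub>R sgn (col V i - a) = col V i"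
    by (simp only: unit_ray_length_sgn) (simp add: sgn_div_norm)
  then show ?thesis
    by (simp add: mix_update_inv_def mix_update_eq_sgn mix_shift_set_col[OF assms(1)] col_set_col a_def)
qed

lemma mix_update_mix_update_inv:
  assumes "C $ i $ i = 0" "V \<in> sphere_prod"
  shows "mix_update \<theta> C i (mix_update_inv \<theta> C i V) = V"
proof -
  define a where "a = mix_shift \<theta> C i V"
  have u: "norm (col V i) = 1" and "0 < unit_ray_length a (col V i)"
    using assms(2) norm_mix_shift_less[OF step_size] unit_ray_length_pos
    by (auto simp: sphere_prod_def a_def)
  then have "sgn (unit_ray_length a (col V i) *\<^sub>R col V i) = col V i"
    by (simp add: sgn_scaleR sgn_div_norm)
  then show ?thesis
    by (simp add: mix_update_inv_def mix_update_eq_sgn mix_shift_set_col[OF assms(1)] col_set_col a_def)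
qed

lemma elementary_near_mix_update: "elementary_near (sphere_prod :: (real^'n^'k) set) (mix_update \<theta> C i)"
proof -
  define w where "w V = col V i - mix_shift \<theta> C i V" for V :: "real^'n^'k"
  define p where "p V = w V \<bullet> w V" for V
  have w: "elementary_on U (\<lambda>V. w V $ r)" for U r
    unfolding w_def by (simp add: elementary_on_diff elementary_on_entry elementary_on_mix_shift)
  have p: "elementary_on UNIV p"
    unfolding p_def by (intro elementary_on_inner_vec w)
  have "0 < p V" if "V \<in> sphere_prod" for V
  proof -
    have "norm (mix_shift \<theta> C i V) < 1" "norm (col V i) = 1"
      using that norm_mix_shift_less[OF step_size] by (auto simp: sphere_prod_def)
    then have "w V \<noteq> 0" unfolding w_def by auto
    then show ?thesis by (simp add: p_def)
  qed
  moreover have "elementary_on {V. 0 < p V} (\<lambda>V. w V $ r * inverse (sqrt (p V)))" for r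
    using open_Collect_positive_elementary[OF p]
    by (intro elementary_on_mult elementary_on_inverse elementary_on_sqrt w elementary_on_subset[OF p]) auto
  moreover have "mix_update \<theta> C i = (\<lambda>V. set_col V i (\<chi> r. w V $ r * inverse (sqrt (p V))))"
    by (simp add: fun_eq_iff mix_update_eq_sgn w_def p_def sgn_div_norm norm_eq_sqrt_inner
        divide_inverse vec_eq_iff)
  ultimately show ?thesis
    by (auto intro!: elementary_near_positive_setI[OF p] elementary_components_on_set_col)
qed

lemma elementary_near_mix_update_inv:
  "elementary_near (sphere_prod :: (real^'n^'k) set) (mix_update_inv \<theta> C i)"
proof -
  define a where "a V = mix_shift \<theta> C i V" for V :: "real^'n^'k"
  define p where "p V = (a V \<bullet> col V i)\<^sup>2 + 1 - a V \<bullet> a V" for V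
  have a: "elementary_on U (\<lambda>V. a V $ r)" and v: "elementary_on U (\<lambda>V. col V i $ r)" for U r
    by (simp_all add: a_def elementary_on_mix_shift elementary_on_entry)
  have p: "elementary_on UNIV p"
    unfolding p_def power2_eq_square
    by (intro elementary_on_diff elementary_on_add elementary_on_mult elementary_on_inner_vec
        elementary_on_const a v)
  have "0 < p V" if "V \<in> sphere_prod" for V
  proof -
    have "a V \<bullet> a V < 1"
      using that norm_mix_shift_less[OF step_size] by (simp add: a_def norm_eq_sqrt_inner)
    then show ?thesis using zero_le_power2[of "a V \<bullet> col V i"] unfolding p_def by linarith
  qed
  moreover have "elementary_on {V. 0 < p V} (\<lambda>V. a V $ r + (- (a V \<bullet> col V i) + sqrt (p V)) * col V i $ r)"
    for r
    using open_Collect_positive_elementary[OF p]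
    by (intro elementary_on_add elementary_on_mult elementary_on_uminus elementary_on_sqrt
        elementary_on_inner_vec elementary_on_subset[OF p] a v) auto
  moreover have "mix_update_inv \<theta> C i =
      (\<lambda>V. set_col V i (\<chi> r. a V $ r + (- (a V \<bullet> col V i) + sqrt (p V)) * col V i $ r))"
    by (simp add: fun_eq_iff mix_update_inv_def unit_ray_length_def a_def p_def vec_eq_iff)
  ultimately show ?thesis
    by (auto intro!: elementary_near_positive_setI[OF p] elementary_components_on_set_col)
qed

end

theorem lemma14:
  fixes C :: "real^('n::{finite,linorder})^('n::{finite,linorder})" and \<theta> :: real
  assumes "transpose C = C"
    and "\<forall>i. C $ i $ i = 0"
    and "0 < \<theta>"
    and "\<theta> * Max (range (col_norm1 C)) < 1"
  shows "diffeomorphism_on (sphere_prod :: (real^('n::{finite,linorder})^'k) set) (mixing \<theta> C)"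
proof -
  let ?S = "sphere_prod :: (real^('n::{finite,linorder})^'k) set"
  let ?L = "sorted_list_of_set (UNIV :: ('n::{finite,linorder}) set)"
  have col_norm1_le: "\<theta> * col_norm1 C i \<le> \<theta> * Max (range (col_norm1 C))" for i
    using assms(3) by (intro mult_left_mono Max_ge) auto
  have step_size: "0 \<le> \<theta>" "\<theta> * col_norm1 C i < 1" for i
    using col_norm1_le[of i] assms(3,4) by linarith+
  have maps: "mix_update \<theta> C i ` ?S \<subseteq> ?S" "mix_update_inv \<theta> C i ` ?S \<subseteq> ?S" for i
    using mix_update_in_sphere_prod[OF step_size] mix_update_inv_in_sphere_prod[OF step_size]
    by blast+
  have inverse: "mix_update_inv \<theta> C i (mix_update \<theta> C i V) = V"
    "mix_update \<theta> C i (mix_update_inv \<theta> C i V) = V" if "V \<in> ?S" for i V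
    using mix_update_inv_mix_update[OF step_size assms(2)[rule_format] that]
      mix_update_mix_update_inv[OF step_size assms(2)[rule_format] that] by simp_all
  have "diffeomorphism_on ?S (fold (mix_update \<theta> C) ?L)"
    by (rule diffeomorphism_on_fold[OF maps inverse])
      (use elementary_near_mix_update[OF step_size] elementary_near_mix_update_inv[OF step_size] in auto)
  then show ?thesis by (simp add: mixing_def[abs_def])
qed

end
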